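(* Let $\theta\in\mathcal X:=\prod_{s\in\mathcal S}\Delta(\mathcal A)$ and $\pi_\theta(a|s)=\theta_{s,a}$, and assume $d^{\pi_\theta,\hat P^{\pi_\theta}}(s)>0$ for all $s$. Define $G(\theta)\in\mathbb R^{\mathcal S\times\mathcal A}$ by $[G(\theta)]_{s,a}=\frac{1}{1-\gamma}d^{\pi_\theta,\hat P^{\pi_\theta}}(s)Q^{\pi_\theta}(s,a)$. Then $$\mathbb E_{s_0\sim\rho}\big(V^\star(s_0)-V^{\pi_\theta}(s_0)\big)\le\Big\|\frac{d^{\pi^\star,\hat P^{\pi_\theta}}}{d^{\pi_\theta,\hat P^{\pi_\theta}}}\Big\|_\infty\max_{\bar\pi\in\mathcal X}\langle\bar\pi-\pi_\theta,G(\theta)\rangle,$$ where $\big\|\frac{d^{\pi^\star,\hat P^{\pi_\theta}}}{d^{\pi_\theta,\hat P^{\pi_\theta}}}\big\|_\infty:=\max_s\frac{d^{\pi^\star,\hat P^{\pi_\theta}}(s)}{d^{\pi_\theta,\hat P^{\pi_\theta}}(s)}$ and $\pi^\star(s)\in\arg\max_a(r(s,a)-\gamma\sigma(P_{s,a},V^\star))$ (viewed as a deterministic policy).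
   Context: $\mathcal S$ and $\mathcal A$ are finite sets; $\Delta(\mathcal X)$ denotes the probability simplex over a finite set $\mathcal X$. $P=\{P_{s,a}\}$ with $P_{s,a}\in\Delta(\mathcal S)$ is the nominal transition kernel, $r:\mathcal S\times\mathcal A\to[0,1]$, $\gamma\in[0,1)$, $\rho\in\Delta(\mathcal S)$. A stationary policy is a map $\pi:\mathcal S\to\Delta(\mathcal A)$. A function $\sigma:\mathbb R^{\mathcal S}\to\mathbb R$ is a convex risk measure if (i) $V'\le V$ pointwise implies $\sigma(V)\le\sigma(V')$; (ii) $\sigma(V+m)=\sigma(V)-m$ for every constant $m$; (iii) $\sigma$ is convex. For each $(s,a)$ a convex risk measure $\sigma(P_{s,a},\cdot)$ is given, with penalty $D(\hat\mu,P_{s,a}):=\sup_{V}\big(-\sigma(P_{s,a},V)-\mathbb E_{s'\sim\hat\mu}V(s')\big)$. For a policy $\pi$, $V^\pi$ is the unique solution of $V^\pi(s)=\sum_a\pi(a|s)(r(s,a)-\gamma\sigma(P_{s,a},V^\pi))$, $Q^\pi(s,a):=r(s,a)-\gamma\sigma(P_{s,a},V^\pi)$; $V^\star$ is the unique solution of $V^\star(s)=\max_a(r(s,a)-\gamma\sigma(P_{s,a},V^\star))$. $\hat P^\pi_{s,a}\in\arg\min_{\hat\mu\in\Delta(\mathcal S)}\big(D(\hat\mu,P_{s,a})+\mathbb E_{s'\sim\hat\mu}V^\pi(s')\big)$. For a policy $\pi$ and stationary kernel $K$, $d^{\pi,K}(s):=(1-\gamma)\sum_{t\ge0}\gamma^t\Pr(s_t=s)$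 with $s_0\sim\rho$, $a_t\sim\pi(\cdot|s_t)$, $s_{t+1}\sim K_{s_t,a_t}$. The inner product is $\langle x,y\rangle=\sum_{s,a}x_{s,a}y_{s,a}$. *)

theory Defs
  imports "HOL-Analysis.Analysis"
begin

definition prob_simplex :: "('x::finite \<Rightarrow> real) set" where
  "prob_simplex = {p. (\<forall>x. 0 \<le> p x) \<and> sum p UNIV = 1}"

definition convex_risk :: "(('s::finite \<Rightarrow> real) \<Rightarrow> real) \<Rightarrow> bool" where
  "convex_risk \<sigma> \<longleftrightarrow>
     (\<forall>V V'. (\<forall>s. V' s \<le> V s) \<longrightarrow> \<sigma> V \<le> \<sigma> V') \<and>
     (\<forall>V m. \<sigma> (\<lambda>s. V s + m) = \<sigma> V - m) \<and>
     (\<forall>V W t. 0 \<le> t \<and> t \<le> 1 \<longrightarrow>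
        \<sigma> (\<lambda>s. t * V s + (1 - t) * W s) \<le> t * \<sigma> V + (1 - t) * \<sigma> W)"

definition penalty ::
  "(('s::finite \<Rightarrow> real) \<Rightarrow> ('s \<Rightarrow> real) \<Rightarrow> real) \<Rightarrow> ('s \<Rightarrow> real) \<Rightarrow> ('s \<Rightarrow> real) \<Rightarrow> ereal" where
  "penalty risk mu p = (SUP V. ereal (- risk p V - (\<Sum>s\<in>UNIV. mu s * V s)))"

definition V_pi ::
  "(('s::finite \<Rightarrow> real) \<Rightarrow> ('s \<Rightarrow> real) \<Rightarrow> real) \<Rightarrow> ('s \<Rightarrow> 'a::finite \<Rightarrow> 's \<Rightarrow> real)
   \<Rightarrow> ('s \<Rightarrow> 'a \<Rightarrow> real) \<Rightarrow> real \<Rightarrow> ('s \<Rightarrow> 'a \<Rightarrow> real) \<Rightarrow> ('s \<Rightarrow> real)" where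
  "V_pi risk P r \<gamma> \<pi> = (THE V. \<forall>s. V s = (\<Sum>a\<in>UNIV. \<pi> s a * (r s a - \<gamma> * risk (P s a) V)))"

definition Q_pi ::
  "(('s::finite \<Rightarrow> real) \<Rightarrow> ('s \<Rightarrow> real) \<Rightarrow> real) \<Rightarrow> ('s \<Rightarrow> 'a::finite \<Rightarrow> 's \<Rightarrow> real)
   \<Rightarrow> ('s \<Rightarrow> 'a \<Rightarrow> real) \<Rightarrow> real \<Rightarrow> ('s \<Rightarrow> 'a \<Rightarrow> real) \<Rightarrow> 's \<Rightarrow> 'a \<Rightarrow> real" where
  "Q_pi risk P r \<gamma> \<pi> s a = r s a - \<gamma> * risk (P s a) (V_pi risk P r \<gamma> \<pi>)"

definition V_star ::
  "(('s::finite \<Rightarrow> real) \<Rightarrow> ('s \<Rightarrow> real) \<Rightarrow> real) \<Rightarrow> ('s \<Rightarrow> 'a::finite \<Rightarrow> 's \<Rightarrow> real)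
   \<Rightarrow> ('s \<Rightarrow> 'a \<Rightarrow> real) \<Rightarrow> real \<Rightarrow> ('s \<Rightarrow> real)" where
  "V_star risk P r \<gamma> = (THE V. \<forall>s. V s = (MAX a. r s a - \<gamma> * risk (P s a) V))"

definition worst_kernel ::
  "(('s::finite \<Rightarrow> real) \<Rightarrow> ('s \<Rightarrow> real) \<Rightarrow> real) \<Rightarrow> ('s \<Rightarrow> 'a::finite \<Rightarrow> 's \<Rightarrow> real)
   \<Rightarrow> ('s \<Rightarrow> real) \<Rightarrow> ('s \<Rightarrow> 'a \<Rightarrow> 's \<Rightarrow> real) \<Rightarrow> bool" where
  "worst_kernel risk P V Phat \<longleftrightarrow>
     (\<forall>s a. Phat s a \<in> prob_simplex \<and>
        (\<forall>mu \<in> prob_simplex. penalty risk (Phat s a) (P s a) + ereal (\<Sum>s'\<in>UNIV. Phat s a s' * V s')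
                         \<le> penalty risk mu (P s a) + ereal (\<Sum>s'\<in>UNIV. mu s' * V s')))"

primrec state_dist ::
  "('s::finite \<Rightarrow> real) \<Rightarrow> ('s \<Rightarrow> 'a::finite \<Rightarrow> real) \<Rightarrow> ('s \<Rightarrow> 'a \<Rightarrow> 's \<Rightarrow> real) \<Rightarrow> nat \<Rightarrow> 's \<Rightarrow> real" where
  "state_dist \<rho> \<pi> K 0 = \<rho>"
| "state_dist \<rho> \<pi> K (Suc t) =
     (\<lambda>s'. \<Sum>s\<in>UNIV. state_dist \<rho> \<pi> K t s * (\<Sum>a\<in>UNIV. \<pi> s a * K s a s'))"

definition occ ::
  "real \<Rightarrow> ('s::finite \<Rightarrow> real) \<Rightarrow> ('s \<Rightarrow> 'a::finite \<Rightarrow> real) \<Rightarrow> ('s \<Rightarrow> 'a \<Rightarrow> 's \<Rightarrow> real) \<Rightarrow> 's \<Rightarrow> real" where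
  "occ \<gamma> \<rho> \<pi> K s = (1 - \<gamma>) * (\<Sum>t. \<gamma> ^ t * state_dist \<rho> \<pi> K t s)"

definition det_policy :: "('s \<Rightarrow> 'a) \<Rightarrow> 's \<Rightarrow> 'a \<Rightarrow> real" where
  "det_policy f s a = (if a = f s then 1 else 0)"

end

theory Submission
  imports Defs
begin

(*
  A convex risk measure is 1-Lipschitz in the sup norm, so both robust Bellman operators are
  gamma-contractions and V^pi, V^star are well defined. A convex risk measure also has a
  subgradient lying in the probability simplex; for the worst-case kernel Phat of V^theta this
  gives sigma(P_sa, V^theta) - sigma(P_sa, W) <= E_{Phat_sa}(W - V^theta) for every W.
  Along the optimal action, the gap V^star - V^theta is therefore a subsolution of the
  evaluation equation of pi^star under Phat with reward Q^theta(s, pi^star s) - V^theta(s);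
  unrolling it gives the robust performance-difference bound, with the occupancy of pi^star.
  The advantage is dominated by the nonnegative greedy gap max_a Q^theta(s,a) - V^theta(s),
  changing occupancy measure costs the distribution-mismatch ratio, and the greedy policy is
  one of the competitors in the maximum over policies.
*)

lemma convex_on_UNIV_has_subgradient:
  fixes f :: "'a::euclidean_space \<Rightarrow> real"
  assumes "convex_on UNIV f"
  shows "\<exists>u. \<forall>x. f v + inner u (x - v) \<le> f x"
proof -
  have "convex ({v} \<times> {..<f v})"
    by (intro convex_Times) auto
  moreover have "epigraph UNIV f \<inter> {v} \<times> {..<f v} = {}"
    by (auto simp: epigraph_def)
  moreover have "epigraph UNIV f \<noteq> {}" "{v} \<times> {..<f v} \<noteq> {}"
    by (auto simp: epigraph_def)
  ultimately obtain a b where "a \<noteq> 0"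
    and above: "\<forall>z\<in>epigraph UNIV f. inner a z \<le> b"
    and below: "\<forall>z\<in>{v} \<times> {..<f v}. b \<le> inner a z"
    using separating_hyperplane_sets[OF convex_epigraphI[OF assms]] by blast
  obtain u t where a: "a = (u, t)" by fastforce
  have epi: "inner u x + t * y \<le> b" if "f x \<le> y" for x y
    using above that a by (auto simp: epigraph_def)
  have "t \<le> 0"
    using epi[of v "f v"] below[rule_format, of "(v, f v - 1)"] a by (simp add: algebra_simps)
  moreover have "t \<noteq> 0"
  proof
    assume "t = 0"
    then have "u \<noteq> 0" using \<open>a \<noteq> 0\<close> a by (simp add: zero_prod_def)
    have "inner u (v + u) \<le> inner u v"
      using epi[of "v + u" "f (v + u)"] below[rule_format, of "(v, f v - 1)"] a \<open>t = 0\<close> by simp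
    then have "inner u u \<le> 0" by (simp add: inner_add_right)
    with \<open>u \<noteq> 0\<close> show False by (metis inner_gt_zero_iff not_le)
  qed
  ultimately have "t < 0" by simp
  \<comment> \<open>the vertical half-line below \<open>(v, f v)\<close> forces the hyperplane through that point\<close>
  have at_v: "f v \<le> (b - inner u v) / t"
  proof (rule dense_le)
    fix y assume "y < f v"
    then have "b \<le> inner u v + t * y" using below a by auto
    then show "y \<le> (b - inner u v) / t" using \<open>t < 0\<close> by (simp add: field_simps)
  qed
  have at_x: "(b - inner u x) / t \<le> f x" for x
    using epi[of x "f x"] \<open>t < 0\<close> by (simp add: field_simps)
  have "f v + inner (- u /\<^sub>R t) (x - v) \<le> f x" for x
  proof -
    have "inner (- u /\<^sub>R t) (x - v) = (inner u v - inner u x) / t"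
      by (simp add: inner_diff_right divide_simps)
    also have "\<dots> = (b - inner u x) / t - (b - inner u v) / t"
      by (simp add: diff_divide_distrib)
    finally show ?thesis
      using at_v at_x[of x] by linarith
  qed
  then show ?thesis by blast
qed

lemma convex_risk_nonexpansive:
  assumes "convex_risk \<sigma>"
  shows "\<bar>\<sigma> V - \<sigma> W\<bar> \<le> (MAX s. \<bar>V s - W s\<bar>)"
proof -
  let ?c = "MAX s. \<bar>V s - W s\<bar>"
  have mono: "\<And>A B. \<forall>s. B s \<le> A s \<Longrightarrow> \<sigma> A \<le> \<sigma> B"
    and shift: "\<And>A m. \<sigma> (\<lambda>s. A s + m) = \<sigma> A - m"
    using assms unfolding convex_risk_def by blast+
  have bound: "\<bar>V s - W s\<bar> \<le> ?c" for s by (rule Max_ge) auto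
  have "W s \<le> V s + ?c" "V s \<le> W s + ?c" for s
    using bound[of s] by linarith+
  then have "\<sigma> (\<lambda>s. V s + ?c) \<le> \<sigma> W" "\<sigma> (\<lambda>s. W s + ?c) \<le> \<sigma> V"
    by (auto intro!: mono)
  then show ?thesis using shift[of V ?c] shift[of W ?c] by linarith
qed

text \<open>The vector \<open>-\<mu>\<close> is a subgradient of \<open>\<sigma>\<close> at \<open>V\<close>; monotonicity makes \<open>\<mu>\<close> nonnegative and
  translation equivariance makes it sum to one.\<close>
lemma convex_risk_has_simplex_subgradient:
  fixes \<sigma> :: "('s::finite \<Rightarrow> real) \<Rightarrow> real"
  assumes "convex_risk \<sigma>"
  shows "\<exists>\<mu>\<in>prob_simplex. \<forall>W. \<sigma> V - (\<Sum>s\<in>UNIV. \<mu> s * (W s - V s)) \<le> \<sigma> W"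
proof -
  have mono: "\<And>A B. \<forall>s. B s \<le> A s \<Longrightarrow> \<sigma> A \<le> \<sigma> B"
    and shift: "\<And>A m. \<sigma> (\<lambda>s. A s + m) = \<sigma> A - m"
    and convex: "\<And>A B t. 0 \<le> t \<Longrightarrow> t \<le> 1 \<Longrightarrow>
                   \<sigma> (\<lambda>s. t * A s + (1 - t) * B s) \<le> t * \<sigma> A + (1 - t) * \<sigma> B"
    using assms unfolding convex_risk_def by blast+
  have "convex_on UNIV (\<lambda>x::real^'s. \<sigma> (($) x))"
  proof (rule convex_onI)
    fix t :: real and x y :: "real^'s" assume "0 < t" "t < 1"
    moreover have "($) ((1 - t) *\<^sub>R x + t *\<^sub>R y) = (\<lambda>s. (1 - t) * x $ s + (1 - (1 - t)) * y $ s)"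
      by auto
    ultimately show "\<sigma> (($) ((1 - t) *\<^sub>R x + t *\<^sub>R y)) \<le> (1 - t) * \<sigma> (($) x) + t * \<sigma> (($) y)"
      using convex[of "1 - t" "($) x" "($) y"] by simp
  qed simp
  from convex_on_UNIV_has_subgradient[OF this, of "\<chi> s. V s"]
  obtain u :: "real^'s" where u: "\<And>x. \<sigma> V + inner u (x - (\<chi> s. V s)) \<le> \<sigma> (($) x)"
    by (auto simp: vec_lambda_inverse)
  define \<mu> where "\<mu> s = - u $ s" for s
  have sub: "\<sigma> V - (\<Sum>s\<in>UNIV. \<mu> s * (W s - V s)) \<le> \<sigma> W" for W
    using u[of "\<chi> s. W s"] by (simp add: inner_vec_def \<mu>_def sum_negf vec_lambda_inverse)
  have "0 \<le> \<mu> s0" for s0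
  proof -
    let ?W = "\<lambda>s. V s + (if s = s0 then 1 else 0)"
    have "\<sigma> ?W \<le> \<sigma> V" by (rule mono) simp
    moreover have "(\<Sum>s\<in>UNIV. \<mu> s * (?W s - V s)) = (\<Sum>s\<in>UNIV. if s = s0 then \<mu> s else 0)"
      by (intro sum.cong) auto
    ultimately show ?thesis using sub[of ?W] by simp
  qed
  moreover have "sum \<mu> UNIV = 1"
  proof -
    have "\<sigma> V - sum \<mu> UNIV \<le> \<sigma> V - 1"
      using sub[of "\<lambda>s. V s + 1"] shift[of V 1] by simp
    moreover have "\<sigma> V + sum \<mu> UNIV \<le> \<sigma> V + 1"
      using sub[of "\<lambda>s. V s + - 1"] shift[of V "- 1"] by (simp add: sum_negf)
    ultimately show ?thesis by linarith
  qed
  ultimately show ?thesis using sub by (auto simp: prob_simplex_def)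
qed

lemma sup_contraction_unique_fixpoint:
  fixes F :: "('s::finite \<Rightarrow> real) \<Rightarrow> 's \<Rightarrow> real"
  assumes "\<gamma> < 1"
    and "\<And>V W s. \<bar>F V s - F W s\<bar> \<le> \<gamma> * (MAX s. \<bar>V s - W s\<bar>)"
  shows "\<exists>!V. F V = V"
proof -
  interpret S: Metric_space "Met_TC.fspace (UNIV::'s set)" "Met_TC.fdist UNIV"
    by (rule Met_TC.Metric_space_funspace)
  have space: "Met_TC.fspace (UNIV::'s set) = UNIV"
    by (auto simp: Met_TC.fspace_def finite_imp_bounded)
  have fdist: "Met_TC.fdist UNIV V W = (MAX s::'s. \<bar>V s - W s\<bar>)" for V W :: "'s \<Rightarrow> real"
    by (simp add: Met_TC.fdist_def space dist_real_def cSup_eq_Max)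
  have complete: "mcomplete_of (funspace (UNIV::'s set) (Met_TC.Self :: real metric))"
    using Met_TC.mcomplete_funspace complete_UNIV by simp
  obtain V where "F V = V"
    using S.Banach_fixedpoint_thm[of F \<gamma>] complete assms
    by (auto simp: space fdist mcomplete_of_def)
  moreover have "W = V" if "F W = W" for W
    using S.contraction_imp_unique_fixpoint[of F W V \<gamma>] that \<open>F V = V\<close> assms
    by (auto simp: space fdist)
  ultimately show ?thesis by blast
qed

lemma THE_pointwise_fixpoint:
  assumes "\<exists>!V. F V = V"
  shows "(THE V. \<forall>s. V s = F V s) s = F (THE V. \<forall>s. V s = F V s) s"
proof -
  from assms have "\<exists>!V. \<forall>s. V s = F V s" by (metis ext)
  from theI'[OF this] show ?thesis by blast
qed

lemma abs_convex_comb_diff_le: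
  fixes w :: "'a::finite \<Rightarrow> real"
  assumes "w \<in> prob_simplex" and "\<And>a. \<bar>f a - g a\<bar> \<le> c"
  shows "\<bar>(\<Sum>a\<in>UNIV. w a * f a) - (\<Sum>a\<in>UNIV. w a * g a)\<bar> \<le> c"
proof -
  have "\<bar>(\<Sum>a\<in>UNIV. w a * f a) - (\<Sum>a\<in>UNIV. w a * g a)\<bar> = \<bar>\<Sum>a\<in>UNIV. w a * (f a - g a)\<bar>"
    by (simp add: sum_subtractf right_diff_distrib)
  also have "\<dots> \<le> (\<Sum>a\<in>UNIV. w a * \<bar>f a - g a\<bar>)"
    using sum_abs[of "\<lambda>a. w a * (f a - g a)" UNIV] assms(1)
    by (simp add: prob_simplex_def abs_mult)
  also have "\<dots> \<le> (\<Sum>a\<in>UNIV. w a * c)"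
    using assms by (intro sum_mono mult_left_mono) (auto simp: prob_simplex_def)
  also have "\<dots> = c"
    using assms(1) by (simp add: prob_simplex_def sum_distrib_right[symmetric])
  finally show ?thesis .
qed

lemma abs_Max_range_diff_le:
  fixes f g :: "'a::finite \<Rightarrow> real"
  assumes "\<And>a. \<bar>f a - g a\<bar> \<le> c"
  shows "\<bar>(MAX a. f a) - (MAX a. g a)\<bar> \<le> c"
proof -
  have "(MAX a. f a) \<le> (MAX a. g a) + c" if "\<And>a. f a \<le> g a + c" for f g :: "'a \<Rightarrow> real"
  proof (subst Max_le_iff, simp_all, intro allI)
    fix a
    have "g a \<le> (MAX a. g a)" by (rule Max_ge) auto
    then show "f a \<le> (MAX a. g a) + c" using that[of a] by linarith
  qed
  moreover have "f a \<le> g a + c" "g a \<le> f a + c" for a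
    using assms[of a] by linarith+
  ultimately have "(MAX a. f a) \<le> (MAX a. g a) + c" "(MAX a. g a) \<le> (MAX a. f a) + c"
    by blast+
  then show ?thesis by linarith
qed

lemma robust_backup_diff_le:
  assumes "convex_risk \<sigma>" and "0 \<le> \<gamma>"
  shows "\<bar>(c - \<gamma> * \<sigma> V) - (c - \<gamma> * \<sigma> W)\<bar> \<le> \<gamma> * (MAX s. \<bar>V s - W s\<bar>)"
proof -
  have "\<bar>(c - \<gamma> * \<sigma> V) - (c - \<gamma> * \<sigma> W)\<bar> = \<gamma> * \<bar>\<sigma> V - \<sigma> W\<bar>"
    using assms(2) by (simp add: abs_mult right_diff_distrib[symmetric] abs_minus_commute)
  also have "\<dots> \<le> \<gamma> * (MAX s. \<bar>V s - W s\<bar>)"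
    using convex_risk_nonexpansive[OF assms(1)] assms(2) by (rule mult_left_mono)
  finally show ?thesis .
qed

lemma V_pi_bellman:
  assumes "0 \<le> \<gamma>" "\<gamma> < 1"
    and "\<And>s a. convex_risk (risk (P s a))"
    and "\<And>s. \<pi> s \<in> prob_simplex"
  shows "V_pi risk P r \<gamma> \<pi> s = (\<Sum>a\<in>UNIV. \<pi> s a * Q_pi risk P r \<gamma> \<pi> s a)"
proof -
  let ?F = "\<lambda>V s. \<Sum>a\<in>UNIV. \<pi> s a * (r s a - \<gamma> * risk (P s a) V)"
  have "\<exists>!V. ?F V = V"
    by (intro sup_contraction_unique_fixpoint[where \<gamma>=\<gamma>] abs_convex_comb_diff_le robust_backup_diff_le assms)
  from THE_pointwise_fixpoint[OF this] show ?thesis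
    by (simp add: V_pi_def Q_pi_def)
qed

lemma V_star_bellman:
  assumes "0 \<le> \<gamma>" "\<gamma> < 1"
    and "\<And>s a. convex_risk (risk (P s a))"
  shows "V_star risk P r \<gamma> s = (MAX a. r s a - \<gamma> * risk (P s a) (V_star risk P r \<gamma>))"
proof -
  let ?F = "\<lambda>V s. MAX a. r s a - \<gamma> * risk (P s a) V"
  have "\<exists>!V. ?F V = V"
    by (intro sup_contraction_unique_fixpoint[where \<gamma>=\<gamma>] abs_Max_range_diff_le robust_backup_diff_le assms)
  from THE_pointwise_fixpoint[OF this] show ?thesis
    by (simp add: V_star_def)
qed

lemma worst_kernel_risk_diff_le:
  assumes "\<And>s a. convex_risk (risk (P s a))"
    and "worst_kernel risk P V Phat"
  shows "risk (P s a) V - risk (P s a) W \<le> (\<Sum>s'\<in>UNIV. Phat s a s' * (W s' - V s'))"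
proof -
  let ?E = "\<lambda>\<mu> U. \<Sum>s'\<in>UNIV. \<mu> s' * U s'"
  obtain \<mu> where "\<mu> \<in> prob_simplex"
    and sub: "\<And>W. risk (P s a) V - (\<Sum>s'\<in>UNIV. \<mu> s' * (W s' - V s')) \<le> risk (P s a) W"
    using convex_risk_has_simplex_subgradient[OF assms(1)] by blast
  \<comment> \<open>the subgradient \<open>\<mu>\<close> attains the supremum defining its penalty at \<open>V\<close>\<close>
  have "penalty risk \<mu> (P s a) \<le> ereal (- risk (P s a) V - ?E \<mu> V)"
    unfolding penalty_def
  proof (rule SUP_least)
    fix U
    show "ereal (- risk (P s a) U - ?E \<mu> U) \<le> ereal (- risk (P s a) V - ?E \<mu> V)"
      using sub[of U] by (simp add: right_diff_distrib sum_subtractf)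
  qed
  have "ereal (- risk (P s a) W - ?E (Phat s a) W) + ereal (?E (Phat s a) V)
      \<le> penalty risk (Phat s a) (P s a) + ereal (?E (Phat s a) V)"
    unfolding penalty_def by (intro add_right_mono SUP_upper) simp
  also have "\<dots> \<le> penalty risk \<mu> (P s a) + ereal (?E \<mu> V)"
    using assms(2) \<open>\<mu> \<in> prob_simplex\<close> unfolding worst_kernel_def by blast
  also have "\<dots> \<le> ereal (- risk (P s a) V - ?E \<mu> V) + ereal (?E \<mu> V)"
    by (rule add_right_mono) fact
  finally have "- risk (P s a) W - ?E (Phat s a) W + ?E (Phat s a) V \<le> - risk (P s a) V"
    by simp
  then show ?thesis by (simp add: right_diff_distrib sum_subtractf)
qed

lemma prob_simplex_le_1: "p \<in> prob_simplex \<Longrightarrow> p x \<le> 1"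
  unfolding prob_simplex_def using member_le_sum[of x UNIV p] by auto

lemma sum_state_dist_Suc:
  "(\<Sum>s'\<in>UNIV. state_dist \<rho> \<pi> K (Suc t) s' * h s')
   = (\<Sum>s\<in>UNIV. state_dist \<rho> \<pi> K t s * (\<Sum>a\<in>UNIV. \<pi> s a * (\<Sum>s'\<in>UNIV. K s a s' * h s')))"
proof -
  have "(\<Sum>s'\<in>UNIV. state_dist \<rho> \<pi> K (Suc t) s' * h s')
      = (\<Sum>s'\<in>UNIV. \<Sum>s\<in>UNIV. \<Sum>a\<in>UNIV. state_dist \<rho> \<pi> K t s * \<pi> s a * K s a s' * h s')"
    by (simp add: sum_distrib_left sum_distrib_right mult.assoc)
  also have "\<dots> = (\<Sum>s\<in>UNIV. \<Sum>a\<in>UNIV. \<Sum>s'\<in>UNIV. state_dist \<rho> \<pi> K t s * \<pi> s a * K s a s' * h s')"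
    by (subst sum.swap) (intro sum.cong refl sum.swap)
  also have "\<dots> = (\<Sum>s\<in>UNIV. state_dist \<rho> \<pi> K t s * (\<Sum>a\<in>UNIV. \<pi> s a * (\<Sum>s'\<in>UNIV. K s a s' * h s')))"
    by (simp add: sum_distrib_left mult.assoc)
  finally show ?thesis .
qed

lemma state_dist_in_prob_simplex:
  assumes "\<rho> \<in> prob_simplex" "\<And>s. \<pi> s \<in> prob_simplex" "\<And>s a. K s a \<in> prob_simplex"
  shows "state_dist \<rho> \<pi> K t \<in> prob_simplex"
proof (induction t)
  case 0
  then show ?case using assms(1) by simp
next
  case (Suc t)
  have "0 \<le> state_dist \<rho> \<pi> K (Suc t) s" for s
    using Suc assms by (auto simp: prob_simplex_def intro!: sum_nonneg mult_nonneg_nonneg)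
  moreover have "sum (state_dist \<rho> \<pi> K (Suc t)) UNIV = 1"
    using sum_state_dist_Suc[of \<rho> \<pi> K t "\<lambda>_. 1"] Suc assms by (simp add: prob_simplex_def)
  ultimately show ?case by (simp add: prob_simplex_def)
qed

lemma state_dist_bounds:
  assumes "\<rho> \<in> prob_simplex" "\<And>s. \<pi> s \<in> prob_simplex" "\<And>s a. K s a \<in> prob_simplex"
  shows "0 \<le> state_dist \<rho> \<pi> K t s" "state_dist \<rho> \<pi> K t s \<le> 1"
  using state_dist_in_prob_simplex[of \<rho> \<pi> K, OF assms]
    prob_simplex_le_1[OF state_dist_in_prob_simplex[of \<rho> \<pi> K, OF assms]]
  by (auto simp: prob_simplex_def)

lemma det_policy_in_prob_simplex: "det_policy f s \<in> prob_simplex"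
  by (simp add: prob_simplex_def det_policy_def)

lemma sum_det_policy:
  fixes f :: "'s \<Rightarrow> 'a::finite"
  shows "(\<Sum>a\<in>UNIV. det_policy f s a * h a) = h (f s)"
proof -
  have "(\<Sum>a\<in>UNIV. det_policy f s a * h a) = (\<Sum>a\<in>UNIV. if a = f s then h a else 0)"
    by (intro sum.cong) (auto simp: det_policy_def)
  then show ?thesis by simp
qed

lemma sub_policy_evaluation_unrolled:
  fixes \<Delta> g :: "'s::finite \<Rightarrow> real" and \<pi> :: "'s \<Rightarrow> 'a::finite \<Rightarrow> real"
  assumes "0 \<le> \<gamma>"
    and "\<rho> \<in> prob_simplex" "\<And>s. \<pi> s \<in> prob_simplex" "\<And>s a. K s a \<in> prob_simplex"
    and sub: "\<And>s. \<Delta> s \<le> g s + \<gamma> * (\<Sum>a\<in>UNIV. \<pi> s a * (\<Sum>s'\<in>UNIV. K s a s' * \<Delta> s'))"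
  shows "(\<Sum>s\<in>UNIV. \<rho> s * \<Delta> s)
         \<le> (\<Sum>t<n. \<gamma> ^ t * (\<Sum>s\<in>UNIV. state_dist \<rho> \<pi> K t s * g s))
           + \<gamma> ^ n * (\<Sum>s\<in>UNIV. state_dist \<rho> \<pi> K n s * \<Delta> s)"
proof (induction n)
  case 0
  then show ?case by simp
next
  case (Suc n)
  let ?\<mu> = "state_dist \<rho> \<pi> K"
  have "(\<Sum>s\<in>UNIV. ?\<mu> n s * \<Delta> s)
      \<le> (\<Sum>s\<in>UNIV. ?\<mu> n s * (g s + \<gamma> * (\<Sum>a\<in>UNIV. \<pi> s a * (\<Sum>s'\<in>UNIV. K s a s' * \<Delta> s'))))"
    using state_dist_bounds(1)[OF assms(2-4)] by (intro sum_mono mult_left_mono sub)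
  also have "\<dots> = (\<Sum>s\<in>UNIV. ?\<mu> n s * g s)
      + \<gamma> * (\<Sum>s\<in>UNIV. ?\<mu> n s * (\<Sum>a\<in>UNIV. \<pi> s a * (\<Sum>s'\<in>UNIV. K s a s' * \<Delta> s')))"
    by (simp add: distrib_left sum.distrib sum_distrib_left mult.left_commute del: state_dist.simps)
  also have "\<dots> = (\<Sum>s\<in>UNIV. ?\<mu> n s * g s) + \<gamma> * (\<Sum>s\<in>UNIV. ?\<mu> (Suc n) s * \<Delta> s)"
    by (simp only: sum_state_dist_Suc)
  finally have step: "(\<Sum>s\<in>UNIV. ?\<mu> n s * \<Delta> s)
      \<le> (\<Sum>s\<in>UNIV. ?\<mu> n s * g s) + \<gamma> * (\<Sum>s\<in>UNIV. ?\<mu> (Suc n) s * \<Delta> s)" .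
  have "\<gamma> ^ n * (\<Sum>s\<in>UNIV. ?\<mu> n s * \<Delta> s)
      \<le> \<gamma> ^ n * ((\<Sum>s\<in>UNIV. ?\<mu> n s * g s) + \<gamma> * (\<Sum>s\<in>UNIV. ?\<mu> (Suc n) s * \<Delta> s))"
    using step assms(1) by (intro mult_left_mono) simp_all
  also have "\<dots> = \<gamma> ^ n * (\<Sum>s\<in>UNIV. ?\<mu> n s * g s) + \<gamma> ^ Suc n * (\<Sum>s\<in>UNIV. ?\<mu> (Suc n) s * \<Delta> s)"
    by (simp only: distrib_left power_Suc mult_ac)
  finally show ?case using Suc.IH by (simp del: state_dist.simps)
qed

lemma summable_discounted_state_dist:
  assumes "0 \<le> \<gamma>" "\<gamma> < 1"
    and "\<rho> \<in> prob_simplex" "\<And>s. \<pi> s \<in> prob_simplex" "\<And>s a. K s a \<in> prob_simplex"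
  shows "summable (\<lambda>t. \<gamma> ^ t * state_dist \<rho> \<pi> K t s)"
  using assms(1,2) state_dist_bounds[OF assms(3-5)]
  by (intro summable_comparison_test[OF _ summable_geometric[of \<gamma>]]) (auto intro!: mult_left_le)

lemma sub_policy_evaluation_le_occ:
  fixes \<Delta> g :: "'s::finite \<Rightarrow> real" and \<pi> :: "'s \<Rightarrow> 'a::finite \<Rightarrow> real"
  assumes "0 \<le> \<gamma>" "\<gamma> < 1"
    and "\<rho> \<in> prob_simplex" "\<And>s. \<pi> s \<in> prob_simplex" "\<And>s a. K s a \<in> prob_simplex"
    and "\<And>s. \<Delta> s \<le> g s + \<gamma> * (\<Sum>a\<in>UNIV. \<pi> s a * (\<Sum>s'\<in>UNIV. K s a s' * \<Delta> s'))"
  shows "(\<Sum>s\<in>UNIV. \<rho> s * \<Delta> s) \<le> (\<Sum>s\<in>UNIV. occ \<gamma> \<rho> \<pi> K s / (1 - \<gamma>) * g s)"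
proof -
  let ?\<mu> = "state_dist \<rho> \<pi> K"
  have "(\<lambda>n. \<Sum>s\<in>UNIV. g s * (\<Sum>t<n. \<gamma> ^ t * ?\<mu> t s))
      \<longlonglongrightarrow> (\<Sum>s\<in>UNIV. g s * (\<Sum>t. \<gamma> ^ t * ?\<mu> t s))"
    using summable_discounted_state_dist[OF assms(1-5)] by (intro tendsto_intros summable_LIMSEQ)
  moreover have "(\<Sum>s\<in>UNIV. g s * (\<Sum>t<n. \<gamma> ^ t * ?\<mu> t s))
      = (\<Sum>t<n. \<gamma> ^ t * (\<Sum>s\<in>UNIV. ?\<mu> t s * g s))" for n
  proof -
    have "(\<Sum>s\<in>UNIV. g s * (\<Sum>t<n. \<gamma> ^ t * ?\<mu> t s))
        = (\<Sum>s\<in>UNIV. \<Sum>t<n. \<gamma> ^ t * (?\<mu> t s * g s))"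
      by (simp add: sum_distrib_left mult_ac)
    also have "\<dots> = (\<Sum>t<n. \<Sum>s\<in>UNIV. \<gamma> ^ t * (?\<mu> t s * g s))"
      by (rule sum.swap)
    finally show ?thesis by (simp add: sum_distrib_left)
  qed
  moreover have "(\<Sum>t. \<gamma> ^ t * ?\<mu> t s) = occ \<gamma> \<rho> \<pi> K s / (1 - \<gamma>)" for s
    using assms(2) by (simp add: occ_def)
  ultimately have partial: "(\<lambda>n. \<Sum>t<n. \<gamma> ^ t * (\<Sum>s\<in>UNIV. ?\<mu> t s * g s))
      \<longlonglongrightarrow> (\<Sum>s\<in>UNIV. occ \<gamma> \<rho> \<pi> K s / (1 - \<gamma>) * g s)"
    by (simp add: mult.commute)
  have bounded: "\<bar>\<Sum>s\<in>UNIV. ?\<mu> n s * \<Delta> s\<bar> \<le> (\<Sum>s\<in>UNIV. \<bar>\<Delta> s\<bar>)" for n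
    using state_dist_bounds[OF assms(3-5)]
    by (intro order_trans[OF sum_abs] sum_mono) (simp add: abs_mult mult_left_le_one_le)
  have "(\<lambda>n. \<gamma> ^ n * (\<Sum>s\<in>UNIV. ?\<mu> n s * \<Delta> s)) \<longlonglongrightarrow> 0"
  proof (rule Lim_null_comparison)
    show "(\<lambda>n. \<gamma> ^ n * (\<Sum>s\<in>UNIV. \<bar>\<Delta> s\<bar>)) \<longlonglongrightarrow> 0"
      using assms(1,2) by (intro tendsto_mult_left_zero LIMSEQ_power_zero) simp
    show "\<forall>\<^sub>F n in sequentially. norm (\<gamma> ^ n * (\<Sum>s\<in>UNIV. ?\<mu> n s * \<Delta> s)) \<le> \<gamma> ^ n * (\<Sum>s\<in>UNIV. \<bar>\<Delta> s\<bar>)"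
      using assms(1) bounded
      by (intro always_eventually allI) (simp add: abs_mult mult_left_mono)
  qed
  from tendsto_add[OF partial this] show ?thesis
    using sub_policy_evaluation_unrolled[OF assms(1,3-6)] by (intro LIMSEQ_le_const) auto
qed

lemma robust_performance_difference_le:
  fixes P :: "'s::finite \<Rightarrow> 'a::finite \<Rightarrow> 's \<Rightarrow> real"
  assumes "0 \<le> \<gamma>" "\<gamma> < 1"
    and "\<rho> \<in> prob_simplex"
    and riskm: "\<And>s a. convex_risk (risk (P s a))"
    and "\<And>s. \<pi> s \<in> prob_simplex"
    and Phat: "worst_kernel risk P (V_pi risk P r \<gamma> \<pi>) Phat"
    and astar: "\<And>s b. r s b - \<gamma> * risk (P s b) (V_star risk P r \<gamma>)
                      \<le> r s (astar s) - \<gamma> * risk (P s (astar s)) (V_star risk P r \<gamma>)"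
  shows "(\<Sum>s\<in>UNIV. \<rho> s * (V_star risk P r \<gamma> s - V_pi risk P r \<gamma> \<pi> s))
         \<le> (\<Sum>s\<in>UNIV. occ \<gamma> \<rho> (det_policy astar) Phat s / (1 - \<gamma>)
                         * (Q_pi risk P r \<gamma> \<pi> s (astar s) - V_pi risk P r \<gamma> \<pi> s))"
proof (rule sub_policy_evaluation_le_occ)
  let ?V = "V_pi risk P r \<gamma> \<pi>" and ?Vopt = "V_star risk P r \<gamma>"
  show "Phat s a \<in> prob_simplex" for s a
    using Phat by (simp add: worst_kernel_def)
  fix s
  have "?Vopt s = (MAX a. r s a - \<gamma> * risk (P s a) ?Vopt)"
    using assms(1,2) riskm by (rule V_star_bellman)
  also have "\<dots> = r s (astar s) - \<gamma> * risk (P s (astar s)) ?Vopt"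
    using astar by (intro Max_eqI) auto
  finally have "?Vopt s = r s (astar s) - \<gamma> * risk (P s (astar s)) ?Vopt" .
  moreover have "\<gamma> * (risk (P s (astar s)) ?V - risk (P s (astar s)) ?Vopt)
      \<le> \<gamma> * (\<Sum>s'\<in>UNIV. Phat s (astar s) s' * (?Vopt s' - ?V s'))"
    using worst_kernel_risk_diff_le[OF riskm Phat] assms(1) by (rule mult_left_mono)
  ultimately show "?Vopt s - ?V s \<le> Q_pi risk P r \<gamma> \<pi> s (astar s) - ?V s
      + \<gamma> * (\<Sum>a\<in>UNIV. det_policy astar s a * (\<Sum>s'\<in>UNIV. Phat s a s' * (?Vopt s' - ?V s')))"
    by (simp add: sum_det_policy Q_pi_def right_diff_distrib)
qed (use assms det_policy_in_prob_simplex in auto)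

lemma occ_nonneg:
  assumes "0 \<le> \<gamma>" "\<gamma> < 1"
    and "\<rho> \<in> prob_simplex" "\<And>s. \<pi> s \<in> prob_simplex" "\<And>s a. K s a \<in> prob_simplex"
  shows "0 \<le> occ \<gamma> \<rho> \<pi> K s"
  using assms(1,2) state_dist_bounds(1)[OF assms(3-5)] summable_discounted_state_dist[OF assms]
  unfolding occ_def by (intro mult_nonneg_nonneg suminf_nonneg) auto

lemma convex_comb_le_Max:
  fixes f :: "'a::finite \<Rightarrow> real"
  assumes "w \<in> prob_simplex"
  shows "(\<Sum>a\<in>UNIV. w a * f a) \<le> (MAX a. f a)"
proof -
  have "(\<Sum>a\<in>UNIV. w a * f a) \<le> (\<Sum>a\<in>UNIV. w a * (MAX a. f a))"
    using assms by (intro sum_mono mult_left_mono) (auto simp: prob_simplex_def)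
  also have "\<dots> = (MAX a. f a)"
    using assms by (simp add: prob_simplex_def sum_distrib_right[symmetric])
  finally show ?thesis .
qed

lemma SUP_policies_ge_greedy:
  fixes w :: "'s::finite \<Rightarrow> real" and Q \<theta> :: "'s \<Rightarrow> 'a::finite \<Rightarrow> real"
  shows "(\<Sum>s\<in>UNIV. w s * ((MAX a. Q s a) - (\<Sum>a\<in>UNIV. \<theta> s a * Q s a)))
         \<le> (SUP pb \<in> {pb. \<forall>s. pb s \<in> prob_simplex}.
              \<Sum>s\<in>UNIV. \<Sum>a\<in>UNIV. (pb s a - \<theta> s a) * (w s * Q s a))"
proof -
  let ?J = "\<lambda>pb. \<Sum>s\<in>UNIV. \<Sum>a\<in>UNIV. (pb s a - \<theta> s a) * (w s * Q s a)"
  have "\<exists>a. Q s a = (MAX a. Q s a)" for s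
  proof -
    have "(MAX a. Q s a) \<in> range (Q s)" by (rule Max_in) auto
    then show ?thesis by (metis imageE)
  qed
  then obtain greedy where greedy: "\<And>s. Q s (greedy s) = (MAX a. Q s a)" by metis
  have "(\<Sum>a\<in>UNIV. (det_policy greedy s a - \<theta> s a) * (w s * Q s a))
      = (\<Sum>a\<in>UNIV. det_policy greedy s a * (w s * Q s a)) - (\<Sum>a\<in>UNIV. \<theta> s a * (w s * Q s a))"
    for s by (simp add: left_diff_distrib sum_subtractf)
  also have "\<dots> s = w s * ((MAX a. Q s a) - (\<Sum>a\<in>UNIV. \<theta> s a * Q s a))" for s
    by (simp only: sum_det_policy[of greedy s "\<lambda>a. w s * Q s a"])
      (simp add: greedy sum_distrib_left right_diff_distrib mult.left_commute)
  finally have "(\<Sum>a\<in>UNIV. (det_policy greedy s a - \<theta> s a) * (w s * Q s a))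
      = w s * ((MAX a. Q s a) - (\<Sum>a\<in>UNIV. \<theta> s a * Q s a))" for s .
  then have "(\<Sum>s\<in>UNIV. w s * ((MAX a. Q s a) - (\<Sum>a\<in>UNIV. \<theta> s a * Q s a))) = ?J (det_policy greedy)"
    by simp
  also have "\<dots> \<le> (SUP pb \<in> {pb. \<forall>s. pb s \<in> prob_simplex}. ?J pb)"
  proof (rule cSUP_upper)
    show "det_policy greedy \<in> {pb. \<forall>s. pb s \<in> prob_simplex}"
      by (simp add: det_policy_in_prob_simplex)
    show "bdd_above (?J ` {pb. \<forall>s. pb s \<in> prob_simplex})"
    proof (rule bdd_aboveI2)
      fix pb :: "'s \<Rightarrow> 'a \<Rightarrow> real" assume "pb \<in> {pb. \<forall>s. pb s \<in> prob_simplex}"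
      then have "0 \<le> pb s a" "pb s a \<le> 1" for s a
        using prob_simplex_le_1[of "pb s" a] by (auto simp: prob_simplex_def)
      have "(pb s a - \<theta> s a) * (w s * Q s a) \<le> (1 + \<bar>\<theta> s a\<bar>) * \<bar>w s * Q s a\<bar>" for s a
      proof -
        have "(pb s a - \<theta> s a) * (w s * Q s a) \<le> \<bar>pb s a - \<theta> s a\<bar> * \<bar>w s * Q s a\<bar>"
          by (metis abs_ge_self abs_mult)
        also have "\<dots> \<le> (1 + \<bar>\<theta> s a\<bar>) * \<bar>w s * Q s a\<bar>"
          using \<open>0 \<le> pb s a\<close> \<open>pb s a \<le> 1\<close> by (intro mult_right_mono) auto
        finally show ?thesis .
      qed
      then show "?J pb \<le> (\<Sum>s\<in>UNIV. \<Sum>a\<in>UNIV. (1 + \<bar>\<theta> s a\<bar>) * \<bar>w s * Q s a\<bar>)"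
        by (intro sum_mono)
    qed
  qed
  finally show ?thesis .
qed

lemma robust_suboptimality_le_greedy_gap:
  fixes P :: "'s::finite \<Rightarrow> 'a::finite \<Rightarrow> 's \<Rightarrow> real"
  assumes "0 \<le> \<gamma>" "\<gamma> < 1"
    and "\<rho> \<in> prob_simplex"
    and riskm: "\<And>s a. convex_risk (risk (P s a))"
    and "\<And>s. \<pi> s \<in> prob_simplex"
    and Phat: "worst_kernel risk P (V_pi risk P r \<gamma> \<pi>) Phat"
    and "\<And>s b. r s b - \<gamma> * risk (P s b) (V_star risk P r \<gamma>)
                 \<le> r s (astar s) - \<gamma> * risk (P s (astar s)) (V_star risk P r \<gamma>)"
  shows "(\<Sum>s\<in>UNIV. \<rho> s * (V_star risk P r \<gamma> s - V_pi risk P r \<gamma> \<pi> s))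
         \<le> (\<Sum>s\<in>UNIV. occ \<gamma> \<rho> (det_policy astar) Phat s
                * (((MAX a. Q_pi risk P r \<gamma> \<pi> s a) - V_pi risk P r \<gamma> \<pi> s) / (1 - \<gamma>)))"
proof -
  let ?V = "V_pi risk P r \<gamma> \<pi>" and ?Q = "Q_pi risk P r \<gamma> \<pi>"
  have "Phat s a \<in> prob_simplex" for s a
    using Phat by (simp add: worst_kernel_def)
  then have "0 \<le> occ \<gamma> \<rho> (det_policy astar) Phat s / (1 - \<gamma>)" for s
    using assms(1-3) by (intro divide_nonneg_nonneg occ_nonneg det_policy_in_prob_simplex) auto
  moreover have "?Q s (astar s) \<le> (MAX a. ?Q s a)" for s
    by (rule Max_ge) auto
  ultimately have "occ \<gamma> \<rho> (det_policy astar) Phat s / (1 - \<gamma>) * (?Q s (astar s) - ?V s)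
      \<le> occ \<gamma> \<rho> (det_policy astar) Phat s * (((MAX a. ?Q s a) - ?V s) / (1 - \<gamma>))" for s
    using mult_left_mono[of "?Q s (astar s) - ?V s" "(MAX a. ?Q s a) - ?V s"] by force
  then show ?thesis
    using robust_performance_difference_le[OF assms] by (meson order_trans sum_mono)
qed

lemma sum_le_Max_ratio_mult:
  fixes p q h :: "'s::finite \<Rightarrow> real"
  assumes "\<And>s. 0 < q s" and "\<And>s. 0 \<le> h s"
  shows "(\<Sum>s\<in>UNIV. p s * h s) \<le> (MAX s. p s / q s) * (\<Sum>s\<in>UNIV. q s * h s)"
proof -
  have "p s \<le> (MAX s. p s / q s) * q s" for s
    using Max_ge[of _ "p s / q s"] by (simp add: pos_divide_le_eq[OF assms(1)])
  then have "p s * h s \<le> (MAX s. p s / q s) * q s * h s" for s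
    using assms(2) by (rule mult_right_mono)
  then show ?thesis
    by (simp add: sum_distrib_left sum_mono mult.assoc)
qed

theorem mainTheorem8:
  fixes P :: "'s::finite \<Rightarrow> 'a::finite \<Rightarrow> 's \<Rightarrow> real"
    and r :: "'s \<Rightarrow> 'a \<Rightarrow> real"
    and \<gamma> :: real
    and \<rho> :: "'s \<Rightarrow> real"
    and risk :: "('s \<Rightarrow> real) \<Rightarrow> ('s \<Rightarrow> real) \<Rightarrow> real"
    and \<theta> :: "'s \<Rightarrow> 'a \<Rightarrow> real"
    and Phat :: "'s \<Rightarrow> 'a \<Rightarrow> 's \<Rightarrow> real"
    and astar :: "'s \<Rightarrow> 'a"
  assumes P: "\<And>s a. P s a \<in> prob_simplex"
    and r: "\<And>s a. 0 \<le> r s a \<and> r s a \<le> 1"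
    and gamma: "0 \<le> \<gamma>" "\<gamma> < 1"
    and rho: "\<rho> \<in> prob_simplex"
    and riskm: "\<And>s a. convex_risk (risk (P s a))"
    and theta: "\<And>s. \<theta> s \<in> prob_simplex"
    and Phat: "worst_kernel risk P (V_pi risk P r \<gamma> \<theta>) Phat"
    and astar: "\<And>s b. r s b - \<gamma> * risk (P s b) (V_star risk P r \<gamma>)
                      \<le> r s (astar s) - \<gamma> * risk (P s (astar s)) (V_star risk P r \<gamma>)"
    and dpos: "\<And>s. occ \<gamma> \<rho> \<theta> Phat s > 0"
  shows "(\<Sum>s\<in>UNIV. \<rho> s * (V_star risk P r \<gamma> s - V_pi risk P r \<gamma> \<theta> s))
         \<le> (MAX s. occ \<gamma> \<rho> (det_policy astar) Phat s / occ \<gamma> \<rho> \<theta> Phat s)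
           * (SUP pb \<in> {pb. \<forall>s. pb s \<in> prob_simplex}.
                (\<Sum>s\<in>UNIV. \<Sum>a\<in>UNIV. (pb s a - \<theta> s a)
                    * (1 / (1 - \<gamma>) * occ \<gamma> \<rho> \<theta> Phat s * Q_pi risk P r \<gamma> \<theta> s a)))"
proof -
  let ?V = "V_pi risk P r \<gamma> \<theta>" and ?Q = "Q_pi risk P r \<gamma> \<theta>"
  let ?d\<^sub>\<theta> = "occ \<gamma> \<rho> \<theta> Phat" and ?d\<^sub>s = "occ \<gamma> \<rho> (det_policy astar) Phat"
  let ?R = "MAX s. ?d\<^sub>s s / ?d\<^sub>\<theta> s"
  have V: "?V s = (\<Sum>a\<in>UNIV. \<theta> s a * ?Q s a)" for s
    using gamma riskm theta by (rule V_pi_bellman)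
  have gap: "0 \<le> ((MAX a. ?Q s a) - ?V s) / (1 - \<gamma>)" for s
    using convex_comb_le_Max[OF theta] gamma by (simp add: V)
  have "Phat s a \<in> prob_simplex" for s a
    using Phat by (simp add: worst_kernel_def)
  then have "0 \<le> ?d\<^sub>s s / ?d\<^sub>\<theta> s" for s
    using gamma rho dpos by (intro divide_nonneg_pos occ_nonneg det_policy_in_prob_simplex)
  then have "0 \<le> ?R"
    by (rule order_trans) (rule Max_ge, auto)
  have "(\<Sum>s\<in>UNIV. \<rho> s * (V_star risk P r \<gamma> s - ?V s))
      \<le> (\<Sum>s\<in>UNIV. ?d\<^sub>s s * (((MAX a. ?Q s a) - ?V s) / (1 - \<gamma>)))"
    by (rule robust_suboptimality_le_greedy_gap[OF gamma rho riskm theta Phat astar])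
  also have "\<dots> \<le> ?R * (\<Sum>s\<in>UNIV. ?d\<^sub>\<theta> s * (((MAX a. ?Q s a) - ?V s) / (1 - \<gamma>)))"
    using dpos gap by (rule sum_le_Max_ratio_mult)
  also have "\<dots> = ?R * (\<Sum>s\<in>UNIV. (1 / (1 - \<gamma>) * ?d\<^sub>\<theta> s)
                             * ((MAX a. ?Q s a) - (\<Sum>a\<in>UNIV. \<theta> s a * ?Q s a)))"
    by (simp add: V)
  also have "\<dots> \<le> ?R * (SUP pb \<in> {pb. \<forall>s. pb s \<in> prob_simplex}.
      (\<Sum>s\<in>UNIV. \<Sum>a\<in>UNIV. (pb s a - \<theta> s a) * (1 / (1 - \<gamma>) * ?d\<^sub>\<theta> s * ?Q s a)))"
    using \<open>0 \<le> ?R\<close> by (intro mult_left_mono SUP_policies_ge_greedy)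
  finally show ?thesis .
qed

end
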